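(* Let $G$ be a group and let $(\hat{X},Z)$ be a pair such that: (1) $\hat{X}$ is a compact AR; (2) $\hat{X}$ is a $\mathscr{Z}$-compactification of $X=\hat{X}-Z$; (3) $G$ acts properly and cocompactly on $X$ (not necessarily freely); (4) (nullity condition) for every compact set $C\subseteq X$ and every open cover $\mathscr{U}$ of $\hat{X}$, all but finitely many $G$-translates of $C$ lie in a single element of $\mathscr{U}$. Then $\dim Z<\infty$ (Lebesgue covering dimension).
   Context: All spaces are locally compact, separable and metrizable. A separable metric space is an AR if whenever it is embedded as a closed subset of another separable metric space, its image is a retract of that space; it is an ANR if some neighborhood of the image retracts onto it. A closed subset $A$ of an ANR $Y$ is a $\mathscr{Z}$-set if there is a homotopy $H:Y\times[0,1]\to Y$ with $H_0=\mathrm{id}_Y$ and $H_t(Y)\subset Y-A$ for all $t>0$. A $\mathscr{Z}$-compactification of $Y$ is a compactification $\hat{Y}$ such that $\hat{Y}-Y$ is a $\mathscr{Z}$-set in $\hat{Y}$. A pair as in the claim is a $\mathscr{Z}$-structure on $G$ in the sense of Dranishnikov. *)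

theory Defs
  imports "HOL-Analysis.Analysis" "HOL-Algebra.Group_Action"
begin

text \<open>Every separable metric space has cardinality at most that of the continuum,
  so up to homeomorphism every separable metric space is a topology on a subset
  of the type real; hence quantifying over (separable metrizable) topologies on
  real captures all ambient separable metric spaces.\<close>

definition AR_space :: "'a topology \<Rightarrow> bool" where
  "AR_space T \<longleftrightarrow> metrizable_space T \<and> separable_space T \<and>
     (\<forall>(U::real topology) e. metrizable_space U \<and> separable_space U \<and>
        embedding_map T U e \<and> closedin U (e ` topspace T)
        \<longrightarrow> (e ` topspace T) retract_of_space U)"

definition ANR_space :: "'a topology \<Rightarrow> bool" where
  "ANR_space T \<longleftrightarrow> metrizable_space T \<and> separable_space T \<and>
     (\<forall>(U::real topology) e. metrizable_space U \<and> separable_space U \<and>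
        embedding_map T U e \<and> closedin U (e ` topspace T)
        \<longrightarrow> (\<exists>W. openin U W \<and> e ` topspace T \<subseteq> W \<and>
                 (e ` topspace T) retract_of_space (subtopology U W)))"

definition Z_set :: "'a topology \<Rightarrow> 'a set \<Rightarrow> bool" where
  "Z_set Y A \<longleftrightarrow> ANR_space Y \<and> closedin Y A \<and>
     (\<exists>H. continuous_map (prod_topology Y (top_of_set {0..1::real})) Y H \<and>
          (\<forall>y\<in>topspace Y. H (y, 0) = y) \<and>
          (\<forall>t\<in>{0<..1}. \<forall>y\<in>topspace Y. H (y, t) \<in> topspace Y - A))"

definition Z_compactification :: "'a topology \<Rightarrow> 'a set \<Rightarrow> bool" where
  "Z_compactification Xh X \<longleftrightarrow> compact_space Xh \<and> Hausdorff_space Xh \<and>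
     X \<subseteq> topspace Xh \<and> Xh closure_of X = topspace Xh \<and>
     Z_set Xh (topspace Xh - X)"

definition covering_dim_le :: "'a topology \<Rightarrow> nat \<Rightarrow> bool" where
  "covering_dim_le T n \<longleftrightarrow>
     (\<forall>\<U>. finite \<U> \<and> (\<forall>U\<in>\<U>. openin T U) \<and> topspace T \<subseteq> \<Union>\<U> \<longrightarrow>
       (\<exists>\<V>. finite \<V> \<and> (\<forall>V\<in>\<V>. openin T V) \<and> topspace T \<subseteq> \<Union>\<V> \<and>
            (\<forall>V\<in>\<V>. \<exists>U\<in>\<U>. V \<subseteq> U) \<and>
            (\<forall>x\<in>topspace T. card {V\<in>\<V>. x \<in> V} \<le> n + 1)))"

definition finite_covering_dim :: "'a topology \<Rightarrow> bool" where
  "finite_covering_dim T \<longleftrightarrow> (\<exists>n. covering_dim_le T n)"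

definition continuous_action :: "('g, 'm) monoid_scheme \<Rightarrow> 'a topology \<Rightarrow> ('g \<Rightarrow> 'a \<Rightarrow> 'a) \<Rightarrow> bool" where
  "continuous_action G X \<phi> \<longleftrightarrow> group_action G (topspace X) \<phi> \<and>
     (\<forall>g\<in>carrier G. continuous_map X X (\<phi> g))"

definition proper_action :: "('g, 'm) monoid_scheme \<Rightarrow> 'a topology \<Rightarrow> ('g \<Rightarrow> 'a \<Rightarrow> 'a) \<Rightarrow> bool" where
  "proper_action G X \<phi> \<longleftrightarrow>
     (\<forall>K. compactin X K \<longrightarrow> finite {g \<in> carrier G. \<phi> g ` K \<inter> K \<noteq> {}})"

definition cocompact_action :: "('g, 'm) monoid_scheme \<Rightarrow> 'a topology \<Rightarrow> ('g \<Rightarrow> 'a \<Rightarrow> 'a) \<Rightarrow> bool" where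
  "cocompact_action G X \<phi> \<longleftrightarrow>
     (\<exists>K. compactin X K \<and> (\<Union>g\<in>carrier G. \<phi> g ` K) = topspace X)"

definition nullity_condition :: "('g, 'm) monoid_scheme \<Rightarrow> 'a topology \<Rightarrow> 'a set \<Rightarrow> ('g \<Rightarrow> 'a \<Rightarrow> 'a) \<Rightarrow> bool" where
  "nullity_condition G Xh X \<phi> \<longleftrightarrow>
     (\<forall>C \<U>. compactin (subtopology Xh X) C \<and> (\<forall>U\<in>\<U>. openin Xh U) \<and> topspace Xh \<subseteq> \<Union>\<U>
        \<longrightarrow> finite {g \<in> carrier G. \<not> (\<exists>U\<in>\<U>. \<phi> g ` C \<subseteq> U)})"

end

theory Submission
  imports Defs
begin

text \<open>Choose a compact \<open>C \<subseteq> X\<close> containing an open \<open>W\<close> whose translates cover \<open>X\<close>. By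
  properness a point of \<open>X\<close> lies in at most \<open>n\<close> translates of \<open>C\<close>, where \<open>n\<close> is the number of
  translates meeting \<open>C\<close>. Given a finite open cover \<open>\<U>\<close> of \<open>Z\<close>, the Z-set homotopy pushes
  \<open>Z\<close> into \<open>X\<close> by a map \<open>h\<close> close to the identity, and the preimages under \<open>h\<close> of the
  translates of \<open>W\<close> form an open cover of \<open>Z\<close> of order at most \<open>n\<close>. By the nullity condition
  all but finitely many translates of \<open>C\<close> are small with respect to a shrinking of \<open>\<U>\<close>; the
  remaining ones form a compact subset of \<open>X\<close> which \<open>h\<close> can be made to avoid, so the pulled
  back cover refines \<open>\<U>\<close>. Hence \<open>dim Z \<le> n\<close>.\<close>

lemma homotopy_eventually_maps_into:
  assumes H: "continuous_map (prod_topology Y (top_of_set {0..1::real})) Y H"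
    and H0: "\<forall>y\<in>topspace Y. H (y, 0) = y"
    and K: "compactin Y K" and U: "openin Y U" and "K \<subseteq> U"
  shows "\<forall>\<^sub>F t in at_right 0. \<forall>z\<in>K. H (z, t) \<in> U"
proof -
  define W where "W = {p \<in> topspace (prod_topology Y (top_of_set {0..1::real})). H p \<in> U}"
  have W: "openin (prod_topology Y (top_of_set {0..1::real})) W"
    unfolding W_def using openin_continuous_map_preimage[OF H U] by simp
  have "K \<times> {0} \<subseteq> W"
    using compactin_subset_topspace[OF K] \<open>K \<subseteq> U\<close> H0 unfolding W_def by (force simp: subset_iff)
  then obtain N V where UV: "openin (top_of_set {0..1::real}) V" "0 \<in> V" "K \<subseteq> N" "N \<times> V \<subseteq> W"
    using tube_lemma_left[OF W K, of 0] by auto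
  then obtain S where S: "open S" "V = {0..1} \<inter> S" by (auto simp: openin_open)
  then obtain e where e: "e > 0" "ball 0 e \<subseteq> S" using UV(2) open_contains_ball by blast
  show ?thesis unfolding eventually_at_right_field
  proof (intro exI[of _ "min e 1"] conjI allI impI ballI)
    fix t z assume t: "0 < t" "t < min e (1::real)" and z: "z \<in> K"
    have "t \<in> V" using t e S by (auto simp: dist_real_def)
    then have "(z, t) \<in> W" using UV z by blast
    then show "H (z, t) \<in> U" unfolding W_def by auto
  qed (use e in simp)
qed

lemma Z_set_push_off:
  assumes "Z_set Y Z" and "finite \<F>"
    and \<F>: "\<And>K U. (K, U) \<in> \<F> \<Longrightarrow> compactin Y K \<and> openin Y U \<and> K \<subseteq> U"
  obtains f where "continuous_map Y Y f" "f ` topspace Y \<subseteq> topspace Y - Z"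
    "\<And>K U. (K, U) \<in> \<F> \<Longrightarrow> f ` K \<subseteq> U"
proof -
  obtain H where H: "continuous_map (prod_topology Y (top_of_set {0..1::real})) Y H"
    and H0: "\<forall>y\<in>topspace Y. H (y, 0) = y"
    and H1: "\<forall>t\<in>{0<..1}. \<forall>y\<in>topspace Y. H (y, t) \<in> topspace Y - Z"
    using assms(1) unfolding Z_set_def by blast
  have "\<forall>\<^sub>F t in at_right 0. (\<forall>(K, U)\<in>\<F>. \<forall>z\<in>K. H (z, t) \<in> U) \<and> 0 < t \<and> t < (1::real)"
  proof (intro eventually_conj eventually_ball_finite[OF \<open>finite \<F>\<close>] ballI)
    show "\<forall>\<^sub>F t in at_right 0. (case p of (K, U) \<Rightarrow> \<forall>z\<in>K. H (z, t) \<in> U)" if "p \<in> \<F>" for p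
      using that \<F> homotopy_eventually_maps_into[OF H H0] by (cases p) auto
    show "\<forall>\<^sub>F t in at_right 0. t < (1::real)"
      unfolding eventually_at_right_field by (intro exI[of _ 1]) auto
  qed (rule eventually_at_right_less)
  then obtain t :: real where t: "\<forall>(K, U)\<in>\<F>. \<forall>z\<in>K. H (z, t) \<in> U" "0 < t" "t < 1"
    using eventually_happens'[OF trivial_limit_at_right_real] by blast
  show thesis
  proof
    have "continuous_map Y (prod_topology Y (top_of_set {0..1::real})) (\<lambda>z. (z, t))"
      using t by (intro continuous_map_pairedI continuous_map_id) (auto simp: continuous_map_const)
    from continuous_map_compose[OF this H] show "continuous_map Y Y (\<lambda>z. H (z, t))"
      by (simp add: o_def)
    show "(\<lambda>z. H (z, t)) ` topspace Y \<subseteq> topspace Y - Z" using H1 t by auto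
    show "(\<lambda>z. H (z, t)) ` K \<subseteq> U" if "(K, U) \<in> \<F>" for K U using t(1) that by auto
  qed
qed

lemma shrink_relative_open_cover:
  assumes "compact_space Y" "Hausdorff_space Y" "closedin Y Z"
    and \<U>: "\<And>U. U \<in> \<U> \<Longrightarrow> openin (subtopology Y Z) U" "Z \<subseteq> \<Union>\<U>"
  obtains \<A> where "finite \<A>" "Z \<subseteq> \<Union>\<A>"
    "\<And>A. A \<in> \<A> \<Longrightarrow> openin Y A \<and> (\<exists>U\<in>\<U>. Y closure_of A \<inter> Z \<subseteq> U)"
proof -
  have normal: "normal_space Y"
    using assms(1,2) by (simp add: compact_Hausdorff_or_regular_imp_normal_space)
  define \<A>0 where "\<A>0 = {A. openin Y A \<and> (\<exists>U\<in>\<U>. Y closure_of A \<inter> Z \<subseteq> U)}"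
  have "Z \<subseteq> \<Union>\<A>0"
  proof
    fix z assume z: "z \<in> Z"
    then obtain U where U: "U \<in> \<U>" "z \<in> U" using \<U>(2) by auto
    then obtain T where T: "openin Y T" "U = T \<inter> Z" using \<U>(1) by (auto simp: openin_subtopology)
    have "closedin Y {z}"
      using z closedin_subset[OF assms(3)]
      by (intro closedin_t1_singleton Hausdorff_imp_t1_space assms(2)) auto
    moreover have "{z} \<subseteq> T" using T U by auto
    ultimately obtain A where A: "openin Y A" "{z} \<subseteq> A" "Y closure_of A \<subseteq> T"
      using normal[unfolded normal_space_alt, rule_format, of "{z}" T] T(1) by blast
    then have "A \<in> \<A>0" unfolding \<A>0_def using T U by blast
    with A show "z \<in> \<Union>\<A>0" by auto
  qed
  moreover have "compactin Y Z" using assms(1,3) by (rule closedin_compact_space)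
  ultimately obtain \<A> where "finite \<A>" "\<A> \<subseteq> \<A>0" "Z \<subseteq> \<Union>\<A>"
    using compactinD[of Y Z \<A>0] unfolding \<A>0_def by auto
  then show thesis by (intro that) (auto simp: \<A>0_def)
qed

lemma compact_neighbourhood_in_open:
  assumes "compact_space Y" "Hausdorff_space Y" "openin Y X" "compactin Y K" "K \<subseteq> X"
  obtains U C where "openin Y U" "K \<subseteq> U" "U \<subseteq> C" "C \<subseteq> X" "compactin Y C"
proof -
  have normal: "normal_space Y"
    using assms(1,2) by (simp add: compact_Hausdorff_or_regular_imp_normal_space)
  have "closedin Y K" using assms(2,4) by (rule compactin_imp_closedin)
  then obtain U where U: "openin Y U" "K \<subseteq> U" "Y closure_of U \<subseteq> X"
    using normal[unfolded normal_space_alt, rule_format, of K X] assms(3,5) by blast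
  show thesis
  proof
    show "U \<subseteq> Y closure_of U" using U(1) by (simp add: closure_of_subset openin_subset)
    show "compactin Y (Y closure_of U)" using assms(1) by (simp add: closedin_compact_space)
  qed (use U in auto)
qed

text \<open>Left multiplication by the inverse of one translate of \<open>C\<close> containing \<open>y\<close> maps the
  others injectively into the finite set of translates meeting \<open>C\<close>.\<close>

lemma (in group_action) card_translates_containing_le:
  assumes "C \<subseteq> E" and P: "finite {g \<in> carrier G. \<phi> g ` C \<inter> C \<noteq> {}}"
  shows "finite {g \<in> carrier G. y \<in> \<phi> g ` C}"
    and "card {g \<in> carrier G. y \<in> \<phi> g ` C} \<le> card {g \<in> carrier G. \<phi> g ` C \<inter> C \<noteq> {}}"
proof -
  interpret group G using group_hom group_hom.axioms(1) by blast
  define S where "S = {g \<in> carrier G. y \<in> \<phi> g ` C}"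
  define P where "P = {g \<in> carrier G. \<phi> g ` C \<inter> C \<noteq> {}}"
  have "finite S \<and> card S \<le> card P"
  proof (cases "S = {}")
    case False
    then obtain k c where k: "k \<in> carrier G" "c \<in> C" "y = \<phi> k c" unfolding S_def by blast
    have "(\<otimes>) (inv k) ` S \<subseteq> P"
    proof
      fix p assume "p \<in> (\<otimes>) (inv k) ` S"
      then obtain g d where g: "g \<in> carrier G" "d \<in> C" "y = \<phi> g d" "p = inv k \<otimes> g"
        unfolding S_def by blast
      have "\<phi> p d = \<phi> (inv k) (\<phi> k c)"
        using g k \<open>C \<subseteq> E\<close> composition_rule[of d "inv k" g] by auto
      also have "\<dots> = c" using k \<open>C \<subseteq> E\<close> orbit_sym_aux[of k c] by blast
      finally have "\<phi> p d \<in> \<phi> p ` C \<inter> C" using g k by blast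
      then show "p \<in> P" unfolding P_def using g k by blast
    qed
    have inj: "inj_on ((\<otimes>) (inv k)) S"
      using k unfolding S_def by (intro inj_onI) (simp add: Units_eq)
    have "finite ((\<otimes>) (inv k) ` S)"
      using P \<open>(\<otimes>) (inv k) ` S \<subseteq> P\<close> finite_subset unfolding P_def by blast
    then show ?thesis
      using finite_imageD[OF _ inj] card_image[OF inj] card_mono[OF _ \<open>(\<otimes>) (inv k) ` S \<subseteq> P\<close>] P
      unfolding P_def by simp
  qed simp
  then show "finite {g \<in> carrier G. y \<in> \<phi> g ` C}"
    and "card {g \<in> carrier G. y \<in> \<phi> g ` C} \<le> card {g \<in> carrier G. \<phi> g ` C \<inter> C \<noteq> {}}"
    unfolding S_def P_def by auto
qed

lemma translates_pullback_refinement: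
  assumes act: "continuous_action G T \<phi>" and "compact_space S" and h: "continuous_map S T h"
    and W: "openin T W" "W \<subseteq> C" "topspace T \<subseteq> (\<Union>g\<in>carrier G. \<phi> g ` W)"
    and mult: "\<And>y. y \<in> topspace T \<Longrightarrow>
      finite {g \<in> carrier G. y \<in> \<phi> g ` C} \<and> card {g \<in> carrier G. y \<in> \<phi> g ` C} \<le> n"
    and small: "\<And>g. g \<in> carrier G \<Longrightarrow> {z \<in> topspace S. h z \<in> \<phi> g ` C} \<noteq> {} \<Longrightarrow>
      \<exists>U\<in>\<U>. {z \<in> topspace S. h z \<in> \<phi> g ` C} \<subseteq> U"
  obtains \<V> where "finite \<V>" "\<And>V. V \<in> \<V> \<Longrightarrow> openin S V" "topspace S \<subseteq> \<Union>\<V>"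
    "\<And>V. V \<in> \<V> \<Longrightarrow> \<exists>U\<in>\<U>. V \<subseteq> U" "\<And>x. x \<in> topspace S \<Longrightarrow> card {V \<in> \<V>. x \<in> V} \<le> n"
proof -
  interpret group_action G "topspace T" \<phi> using act by (simp add: continuous_action_def)
  interpret group G using group_hom group_hom.axioms(1) by blast
  have hT: "h z \<in> topspace T" if "z \<in> topspace S" for z
    using h that by (simp add: continuous_map_def Pi_iff)
  define V where "V g = {z \<in> topspace S. \<phi> (inv\<^bsub>G\<^esub> g) (h z) \<in> W}" for g
  have V_open: "openin S (V g)" if "g \<in> carrier G" for g
  proof -
    have "continuous_map S T (\<phi> (inv\<^bsub>G\<^esub> g) \<circ> h)"
      using act that by (intro continuous_map_compose[OF h]) (simp add: continuous_action_def)
    from openin_continuous_map_preimage[OF this W(1)] show ?thesis by (simp add: V_def)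
  qed
  have V_sub: "V g \<subseteq> {z \<in> topspace S. h z \<in> \<phi> g ` C}" if "g \<in> carrier G" for g
  proof
    fix z assume z: "z \<in> V g"
    have "\<phi> (inv\<^bsub>G\<^esub> (inv\<^bsub>G\<^esub> g)) (\<phi> (inv\<^bsub>G\<^esub> g) (h z)) = h z"
      using z that hT by (intro orbit_sym_aux[of "inv\<^bsub>G\<^esub> g" "h z"]) (auto simp: V_def)
    then have "h z = \<phi> g (\<phi> (inv\<^bsub>G\<^esub> g) (h z))" using that by simp
    with z W(2) show "z \<in> {z \<in> topspace S. h z \<in> \<phi> g ` C}" unfolding V_def by blast
  qed
  have V_cover: "topspace S \<subseteq> \<Union>(V ` carrier G)"
  proof
    fix z assume z: "z \<in> topspace S"
    then obtain g w where g: "g \<in> carrier G" "w \<in> W" "h z = \<phi> g w" using W(3) hT by blast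
    have "\<phi> (inv\<^bsub>G\<^esub> g) (h z) = w"
      by (rule orbit_sym_aux) (use g openin_subset[OF W(1)] in auto)
    then show "z \<in> \<Union>(V ` carrier G)" using z g unfolding V_def by blast
  qed
  obtain \<F> where "finite \<F>" "\<F> \<subseteq> V ` carrier G" "topspace S \<subseteq> \<Union>\<F>"
    using compactinD[of S "topspace S" "V ` carrier G"] \<open>compact_space S\<close> V_open V_cover
    by (auto simp: compact_space_def)
  then obtain G0 where G0: "G0 \<subseteq> carrier G" "finite G0" "topspace S \<subseteq> \<Union>(V ` G0)"
    using finite_subset_image by metis
  show thesis
  proof
    show "finite (V ` G0 - {{}})" using G0 by simp
    show "openin S U" if "U \<in> V ` G0 - {{}}" for U using that G0 V_open by blast
    show "topspace S \<subseteq> \<Union>(V ` G0 - {{}})" using G0 by blast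
    show "\<exists>U\<in>\<U>. U' \<subseteq> U" if U': "U' \<in> V ` G0 - {{}}" for U'
    proof -
      obtain g where g: "g \<in> G0" "U' = V g" using U' by blast
      with G0(1) have "g \<in> carrier G" by blast
      have "V g \<noteq> {}" using U' g(2) by blast
      then have "{z \<in> topspace S. h z \<in> \<phi> g ` C} \<noteq> {}"
        using V_sub[OF \<open>g \<in> carrier G\<close>] by blast
      then obtain U where "U \<in> \<U>" "{z \<in> topspace S. h z \<in> \<phi> g ` C} \<subseteq> U"
        using small[OF \<open>g \<in> carrier G\<close>] by blast
      moreover have "V g \<subseteq> U"
        using order_trans[OF V_sub[OF \<open>g \<in> carrier G\<close>] \<open>_ \<subseteq> U\<close>] .
      ultimately show ?thesis unfolding g(2) by blast
    qed
    show "card {U \<in> V ` G0 - {{}}. x \<in> U} \<le> n" if x: "x \<in> topspace S" for x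
    proof -
      define Gx where "Gx = {g \<in> carrier G. h x \<in> \<phi> g ` C}"
      have "{U \<in> V ` G0 - {{}}. x \<in> U} \<subseteq> V ` Gx"
      proof
        fix U assume "U \<in> {U \<in> V ` G0 - {{}}. x \<in> U}"
        then obtain g where "g \<in> G0" "U = V g" "x \<in> V g" by blast
        with G0(1) V_sub show "U \<in> V ` Gx" unfolding Gx_def by blast
      qed
      then have "card {U \<in> V ` G0 - {{}}. x \<in> U} \<le> card (V ` Gx)"
        using mult[OF hT[OF x]] unfolding Gx_def by (intro card_mono) auto
      also have "\<dots> \<le> card Gx" by (rule card_image_le) (use mult[OF hT[OF x]] Gx_def in simp)
      also have "\<dots> \<le> n" using mult[OF hT[OF x]] unfolding Gx_def by blast
      finally show ?thesis .
    qed
  qed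
qed

lemma Z_set_push_off_avoiding:
  assumes "compact_space Y" "Z_set Y Z" "finite \<A>"
    and u: "\<And>A. A \<in> \<A> \<Longrightarrow> openin (subtopology Y Z) (u A) \<and> Y closure_of A \<inter> Z \<subseteq> u A"
    and D: "openin Y D" "Z \<subseteq> D" and Q: "closedin Y Q" "Q \<inter> Z = {}"
  obtains f where "continuous_map Y Y f" "f ` topspace Y \<subseteq> topspace Y - Z" "f ` Z \<subseteq> D - Q"
    "\<And>A z. A \<in> \<A> \<Longrightarrow> z \<in> Z \<Longrightarrow> f z \<in> Y closure_of A \<Longrightarrow> z \<in> u A"
proof -
  have Zcl: "closedin Y Z" using assms(2) by (simp add: Z_set_def)
  then have Zc: "compactin Y Z" using assms(1) by (rule closedin_compact_space[rotated])
  define \<F> where "\<F> = {(Z, D), (Z, topspace Y - Q)} \<union> (\<lambda>A. (Z - u A, topspace Y - Y closure_of A)) ` \<A>"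
  have \<F>: "compactin Y K \<and> openin Y U \<and> K \<subseteq> U" if KU: "(K, U) \<in> \<F>" for K U
  proof -
    have constraint_A: "compactin Y (Z - u A) \<and> openin Y (topspace Y - Y closure_of A) \<and>
      Z - u A \<subseteq> topspace Y - Y closure_of A" if "A \<in> \<A>" for A
    proof (intro conjI)
      have "closedin Y (Z - u A)"
        using u[OF that] by (metis Zcl closedin_diff closedin_subset closedin_topspace
            closedin_trans_full topspace_subtopology_subset)
      then show "compactin Y (Z - u A)" using assms(1) by (rule closedin_compact_space[rotated])
      show "Z - u A \<subseteq> topspace Y - Y closure_of A" using u that closedin_subset[OF Zcl] by blast
    qed (simp add: openin_diff)
    have ZQ: "Z \<subseteq> topspace Y - Q" using Q closedin_subset[OF Zcl] by blast
    consider "K = Z" "U = D" | "K = Z" "U = topspace Y - Q"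
      | A where "A \<in> \<A>" "K = Z - u A" "U = topspace Y - Y closure_of A"
      using KU unfolding \<F>_def by fast
    then show ?thesis
    proof cases
      case 1
      then show ?thesis using Zc D by simp
    next
      case 2
      then show ?thesis using Zc Q(1) ZQ by (simp add: openin_diff)
    next
      case (3 A)
      then show ?thesis using constraint_A by simp
    qed
  qed
  have "finite \<F>" using assms(3) unfolding \<F>_def by simp
  then obtain f where f: "continuous_map Y Y f" "f ` topspace Y \<subseteq> topspace Y - Z"
    "\<And>K U. (K, U) \<in> \<F> \<Longrightarrow> f ` K \<subseteq> U"
    using Z_set_push_off[OF assms(2) _ \<F>] by metis
  show thesis
  proof (rule that[OF f(1,2)])
    show "f ` Z \<subseteq> D - Q" using f(3) unfolding \<F>_def by auto
    show "z \<in> u A" if "A \<in> \<A>" "z \<in> Z" "f z \<in> Y closure_of A" for A z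
      using f(3)[of "Z - u A" "topspace Y - Y closure_of A"] that unfolding \<F>_def by blast
  qed
qed

lemma compactin_Union_translates:
  assumes "continuous_action G T \<phi>" "compactin T C" "finite B" "B \<subseteq> carrier G"
  shows "compactin T (\<Union>g\<in>B. \<phi> g ` C)"
proof (rule compactin_Union)
  show "finite ((\<lambda>g. \<phi> g ` C) ` B)" using assms(3) by simp
  show "compactin T K" if "K \<in> (\<lambda>g. \<phi> g ` C) ` B" for K
    using that assms unfolding continuous_action_def by (auto intro: image_compactin)
qed

lemma push_off_with_small_translates:
  assumes "compact_space Y" "Hausdorff_space Y" "Z_set Y Z" and X: "X = topspace Y - Z"
    and act: "continuous_action G (subtopology Y X) \<phi>"
    and null: "nullity_condition G Y X \<phi>"
    and C: "compactin (subtopology Y X) C"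
    and \<U>: "\<And>U. U \<in> \<U> \<Longrightarrow> openin (subtopology Y Z) U" "Z \<subseteq> \<Union>\<U>"
  obtains h where "continuous_map (subtopology Y Z) (subtopology Y X) h"
    "\<And>g. g \<in> carrier G \<Longrightarrow> {z \<in> Z. h z \<in> \<phi> g ` C} \<noteq> {} \<Longrightarrow>
       \<exists>U\<in>\<U>. {z \<in> Z. h z \<in> \<phi> g ` C} \<subseteq> U"
proof -
  have Zcl: "closedin Y Z" using assms(3) by (simp add: Z_set_def)
  obtain \<A> where \<A>: "finite \<A>" "Z \<subseteq> \<Union>\<A>"
    "\<And>A. A \<in> \<A> \<Longrightarrow> openin Y A \<and> (\<exists>U\<in>\<U>. Y closure_of A \<inter> Z \<subseteq> U)"
    using shrink_relative_open_cover[OF assms(1,2) Zcl \<U>] by metis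
  obtain u where u: "\<And>A. A \<in> \<A> \<Longrightarrow> u A \<in> \<U> \<and> Y closure_of A \<inter> Z \<subseteq> u A"
    using \<A>(3) by metis
  have "normal_space Y"
    using assms(1,2) by (simp add: compact_Hausdorff_or_regular_imp_normal_space)
  moreover have "closedin Y (topspace Y - \<Union>\<A>)"
    using \<A>(3) by (intro closedin_diff closedin_topspace openin_Union) blast
  moreover have "disjnt Z (topspace Y - \<Union>\<A>)" using \<A>(2) by (auto simp: disjnt_def)
  ultimately obtain D E where DE: "openin Y D" "openin Y E" "Z \<subseteq> D"
    "topspace Y - \<Union>\<A> \<subseteq> E" "disjnt D E"
    using Zcl by (metis normal_space_def)
  text \<open>Translates of \<open>C\<close> inside \<open>E\<close> miss \<open>f ` Z \<subseteq> D\<close> for the push-off \<open>f\<close> chosen below; the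
    finitely many fitting in no member of \<open>insert E \<A>\<close> make up the compact \<open>Q \<subseteq> X\<close> that \<open>f\<close> avoids.\<close>
  define Bad where "Bad = {g \<in> carrier G. \<not> (\<exists>W\<in>insert E \<A>. \<phi> g ` C \<subseteq> W)}"
  have "finite Bad" unfolding Bad_def
  proof (rule null[unfolded nullity_condition_def, rule_format, OF conjI[OF C conjI]])
    show "\<forall>W\<in>insert E \<A>. openin Y W" using DE(2) \<A>(3) by blast
    show "topspace Y \<subseteq> \<Union>(insert E \<A>)" using DE(4) by blast
  qed
  define Q where "Q = (\<Union>g\<in>Bad. \<phi> g ` C)"
  have "compactin (subtopology Y X) Q"
    unfolding Q_def using act C \<open>finite Bad\<close> by (rule compactin_Union_translates) (simp add: Bad_def)
  then have Q: "closedin Y Q" "Q \<inter> Z = {}"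
    using assms(2) X by (auto simp: compactin_subtopology compactin_imp_closedin)
  obtain f where f: "continuous_map Y Y f" "f ` topspace Y \<subseteq> topspace Y - Z" "f ` Z \<subseteq> D - Q"
    "\<And>A z. A \<in> \<A> \<Longrightarrow> z \<in> Z \<Longrightarrow> f z \<in> Y closure_of A \<Longrightarrow> z \<in> u A"
    using Z_set_push_off_avoiding[OF assms(1,3) \<A>(1) _ DE(1,3) Q, of u] u \<U>(1) by metis
  show thesis
  proof
    show "continuous_map (subtopology Y Z) (subtopology Y X) f"
      using f(1,2) X by (auto simp: continuous_map_in_subtopology continuous_map_from_subtopology)
    fix g assume g: "g \<in> carrier G" and "{z \<in> Z. f z \<in> \<phi> g ` C} \<noteq> {}"
    then obtain z0 where z0: "z0 \<in> Z" "f z0 \<in> \<phi> g ` C" by blast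
    then have "g \<notin> Bad" using f(3) unfolding Q_def by blast
    then obtain W where W: "W \<in> insert E \<A>" "\<phi> g ` C \<subseteq> W" using g unfolding Bad_def by blast
    have "f z0 \<in> D" using f(3) z0(1) by blast
    then have "W \<noteq> E" using DE(5) z0(2) W(2) by (auto simp: disjnt_def)
    with W(1) have "W \<in> \<A>" by blast
    have "{z \<in> Z. f z \<in> \<phi> g ` C} \<subseteq> u W"
    proof
      fix z assume z: "z \<in> {z \<in> Z. f z \<in> \<phi> g ` C}"
      have "W \<subseteq> Y closure_of W" using \<A>(3)[OF \<open>W \<in> \<A>\<close>] by (simp add: closure_of_subset openin_subset)
      then have "f z \<in> Y closure_of W" using z W(2) by blast
      then show "z \<in> u W" using z f(4)[OF \<open>W \<in> \<A>\<close>] by blast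
    qed
    then show "\<exists>U\<in>\<U>. {z \<in> Z. f z \<in> \<phi> g ` C} \<subseteq> U" using u[OF \<open>W \<in> \<A>\<close>] by blast
  qed
qed

lemma covering_dim_le_of_translates_cover:
  assumes "compact_space Y" "Hausdorff_space Y" "Z_set Y Z" and X: "X = topspace Y - Z"
    and act: "continuous_action G (subtopology Y X) \<phi>"
    and null: "nullity_condition G Y X \<phi>"
    and WC: "openin Y W" "W \<subseteq> C" "C \<subseteq> X" "compactin Y C"
    and cover: "X \<subseteq> (\<Union>g\<in>carrier G. \<phi> g ` W)"
    and P: "finite {g \<in> carrier G. \<phi> g ` C \<inter> C \<noteq> {}}"
  shows "covering_dim_le (subtopology Y Z) (card {g \<in> carrier G. \<phi> g ` C \<inter> C \<noteq> {}})"
    (is "covering_dim_le _ (card ?P)")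
  unfolding covering_dim_le_def
proof (intro allI impI)
  fix \<U> assume \<U>: "finite \<U> \<and> (\<forall>U\<in>\<U>. openin (subtopology Y Z) U) \<and> topspace (subtopology Y Z) \<subseteq> \<Union>\<U>"
  have Zcl: "closedin Y Z" using assms(3) by (simp add: Z_set_def)
  have tsX: "topspace (subtopology Y X) = X" and tsZ: "topspace (subtopology Y Z) = Z"
    using closedin_subset[OF Zcl] X by auto
  obtain h where h: "continuous_map (subtopology Y Z) (subtopology Y X) h"
    "\<And>g. g \<in> carrier G \<Longrightarrow> {z \<in> Z. h z \<in> \<phi> g ` C} \<noteq> {} \<Longrightarrow>
       \<exists>U\<in>\<U>. {z \<in> Z. h z \<in> \<phi> g ` C} \<subseteq> U"
  proof (rule push_off_with_small_translates[OF assms(1-3) X act null])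
    show "compactin (subtopology Y X) C" using WC(3,4) by (simp add: compactin_subtopology)
    show "\<And>U. U \<in> \<U> \<Longrightarrow> openin (subtopology Y Z) U" "Z \<subseteq> \<Union>\<U>" using \<U> tsZ by auto
  qed (rule that)
  have "compact_space (subtopology Y Z)"
    using Zcl assms(1) by (simp add: closedin_compact_space compact_space_subtopology)
  moreover have "openin (subtopology Y X) W"
    using WC(1-3) X by (auto simp: openin_subtopology_alt intro!: exI[of _ W])
  moreover have "topspace (subtopology Y X) \<subseteq> (\<Union>g\<in>carrier G. \<phi> g ` W)" using cover tsX by simp
  ultimately show "\<exists>\<V>. finite \<V> \<and> (\<forall>V\<in>\<V>. openin (subtopology Y Z) V) \<and>
    topspace (subtopology Y Z) \<subseteq> \<Union>\<V> \<and> (\<forall>V\<in>\<V>. \<exists>U\<in>\<U>. V \<subseteq> U) \<and>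
    (\<forall>x\<in>topspace (subtopology Y Z). card {V \<in> \<V>. x \<in> V} \<le> card ?P + 1)"
  proof (rule translates_pullback_refinement[OF act _ h(1) _ WC(2)])
    interpret group_action G X \<phi> using act tsX by (simp add: continuous_action_def)
    show "finite {g \<in> carrier G. y \<in> \<phi> g ` C} \<and> card {g \<in> carrier G. y \<in> \<phi> g ` C} \<le> card ?P" for y
      using card_translates_containing_le[OF WC(3) P] by blast
    show "\<exists>U\<in>\<U>. {z \<in> topspace (subtopology Y Z). h z \<in> \<phi> g ` C} \<subseteq> U"
      if "g \<in> carrier G" "{z \<in> topspace (subtopology Y Z). h z \<in> \<phi> g ` C} \<noteq> {}" for g
      using h(2) that unfolding tsZ by blast
    fix \<V> assume "finite \<V>" "\<And>V. V \<in> \<V> \<Longrightarrow> openin (subtopology Y Z) V"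
      "topspace (subtopology Y Z) \<subseteq> \<Union>\<V>" "\<And>V. V \<in> \<V> \<Longrightarrow> \<exists>U\<in>\<U>. V \<subseteq> U"
      "\<And>x. x \<in> topspace (subtopology Y Z) \<Longrightarrow> card {V \<in> \<V>. x \<in> V} \<le> card ?P"
    then show ?thesis by (intro exI[of _ \<V>]) (auto intro: le_SucI)
  qed
qed

theorem corollary3p3:
  fixes G :: "('g, 'm) monoid_scheme"
    and Xh :: "'a topology"
    and Z :: "'a set"
    and \<phi> :: "'g \<Rightarrow> 'a \<Rightarrow> 'a"
  defines "X \<equiv> topspace Xh - Z"
  assumes "group G"
    and "Z \<subseteq> topspace Xh"
    and "compact_space Xh"
    and "AR_space Xh"
    and "Z_compactification Xh X"
    and "continuous_action G (subtopology Xh X) \<phi>"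
    and "proper_action G (subtopology Xh X) \<phi>"
    and "cocompact_action G (subtopology Xh X) \<phi>"
    and "nullity_condition G Xh X \<phi>"
  shows "finite_covering_dim (subtopology Xh Z)"
proof -
  have "topspace Xh - X = Z" unfolding X_def using assms(3) by blast
  then have Haus: "Hausdorff_space Xh" and Zset: "Z_set Xh Z"
    using assms(6) unfolding Z_compactification_def by auto
  have Xopen: "openin Xh X" using Zset unfolding X_def Z_set_def by blast
  have "topspace (subtopology Xh X) = X" unfolding X_def by auto
  then obtain K where K: "compactin Xh K" "K \<subseteq> X" "(\<Union>g\<in>carrier G. \<phi> g ` K) = X"
    using assms(9) by (auto simp: cocompact_action_def compactin_subtopology)
  then obtain W C where WC: "openin Xh W" "K \<subseteq> W" "W \<subseteq> C" "C \<subseteq> X" "compactin Xh C"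
    using compact_neighbourhood_in_open[OF assms(4) Haus Xopen] by metis
  have "finite {g \<in> carrier G. \<phi> g ` C \<inter> C \<noteq> {}}"
    using assms(8) WC(4,5) unfolding proper_action_def by (simp add: compactin_subtopology)
  with K WC have "covering_dim_le (subtopology Xh Z) (card {g \<in> carrier G. \<phi> g ` C \<inter> C \<noteq> {}})"
    by (intro covering_dim_le_of_translates_cover[OF assms(4) Haus Zset X_def[THEN meta_eq_to_obj_eq]
          assms(7,10)]) auto
  then show ?thesis unfolding finite_covering_dim_def by blast
qed

end
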